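(* Let $x^*\in\mathbb{R}^n$ satisfy $Ax^*=b$, and let $x_1,\ldots,x_\ell\in\mathbb{R}^n$ be points with \[x_\ell=\operatorname{argmin}_{\xi\in\operatorname{aff}(x_1,\ldots,x_\ell)}\|\xi-x^*\|^2.\] If $P(x_\ell)\in\operatorname{aff}(x_1,\ldots,x_\ell)$, then $r(x_\ell)=0$, $P(x_\ell)=x_\ell$ and $Ax_\ell=b$.
   Context: Let $A=(a_1,\ldots,a_m)^T\in\mathbb{R}^{m\times n}$ with rows $a_j\in\mathbb{R}^n\setminus\{0\}$, and let $b\in\mathbb{R}^m$ lie in the range of $A$. Norms are Euclidean. For $j=1,\ldots,m$ define the projectors $P_j:\mathbb{R}^n\to\mathbb{R}^n$, $P_j(x)=\big(I-\frac{a_ja_j^T}{\|a_j\|^2}\big)x+\frac{b_j}{\|a_j\|^2}a_j$ (the orthogonal projection onto $\{z:a_j^Tz=b_j\}$), and the Kaczmarz cycle $P=P_m\circ\cdots\circ P_1$. The residual $r:\mathbb{R}^n\to\mathbb{R}^m$ is defined by $r_1(x)=(a_1^Tx-b_1)/\|a_1\|$ and $r_j(x)=(a_j^T(P_{j-1}\circ\cdots\circ P_1)(x)-b_j)/\|a_j\|$ for $j=2,\ldots,m$. $\operatorname{aff}(\cdot)$ denotes the affine hull. *)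

theory Defs
  imports "HOL-Analysis.Analysis"
begin

text \<open>Rows of A are a 1, ..., a m (1-based); right-hand side b 1, ..., b m.\<close>

definition kproj :: "(nat \<Rightarrow> real ^'n) \<Rightarrow> (nat \<Rightarrow> real) \<Rightarrow> nat \<Rightarrow> real ^'n \<Rightarrow> real ^'n" where
  "kproj a b j x = x - ((a j \<bullet> x) / (norm (a j))\<^sup>2) *\<^sub>R a j + (b j / (norm (a j))\<^sup>2) *\<^sub>R a j"

fun kcomp :: "(nat \<Rightarrow> real ^'n) \<Rightarrow> (nat \<Rightarrow> real) \<Rightarrow> nat \<Rightarrow> real ^'n \<Rightarrow> real ^'n" where
  "kcomp a b 0 = id"
| "kcomp a b (Suc k) = kproj a b (Suc k) \<circ> kcomp a b k"

definition kcycle :: "(nat \<Rightarrow> real ^'n) \<Rightarrow> (nat \<Rightarrow> real) \<Rightarrow> nat \<Rightarrow> real ^'n \<Rightarrow> real ^'n" where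
  "kcycle a b m = kcomp a b m"

definition kres :: "(nat \<Rightarrow> real ^'n) \<Rightarrow> (nat \<Rightarrow> real) \<Rightarrow> nat \<Rightarrow> real ^'n \<Rightarrow> real" where
  "kres a b j x = (a j \<bullet> kcomp a b (j - 1) x - b j) / norm (a j)"

end

theory Submission
  imports Defs
begin

text \<open>Each projection \<open>P\<^sub>j\<close> is orthogonal onto a hyperplane containing the solution \<open>x\<^sup>*\<close>, so by
Pythagoras it decreases the squared distance to \<open>x\<^sup>*\<close> by exactly \<open>r\<^sub>j\<^sup>2\<close>; over a full cycle,
\<open>\<parallel>P x - x\<^sup>*\<parallel>\<^sup>2 = \<parallel>x - x\<^sup>*\<parallel>\<^sup>2 - \<parallel>r(x)\<parallel>\<^sup>2\<close>. Since \<open>x\<^sub>\<ell>\<close> is the point of the affine hull closest to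
\<open>x\<^sup>*\<close> and \<open>P x\<^sub>\<ell>\<close> lies in that hull, the residual vanishes, and then every \<open>P\<^sub>j\<close> fixes \<open>x\<^sub>\<ell>\<close>.\<close>

lemma norm_kproj_diff_sq:
  fixes a :: "nat \<Rightarrow> real ^'n"
  assumes "a j \<noteq> 0" and "a j \<bullet> xstar = b j"
  shows "(norm (kproj a b j z - xstar))\<^sup>2
           = (norm (z - xstar))\<^sup>2 - ((a j \<bullet> z - b j) / norm (a j))\<^sup>2"
proof -
  define t where "t = (a j \<bullet> z - b j) / (norm (a j))\<^sup>2"
  have step: "kproj a b j z - xstar = (z - xstar) - t *\<^sub>R a j"
    unfolding kproj_def t_def by (simp add: algebra_simps diff_divide_distrib)
  have "(norm (kproj a b j z - xstar))\<^sup>2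
      = (norm (z - xstar))\<^sup>2 - 2 * t * (a j \<bullet> (z - xstar)) + t\<^sup>2 * (norm (a j))\<^sup>2"
    unfolding step power2_norm_eq_inner
    by (simp add: inner_diff_left inner_diff_right inner_commute algebra_simps power2_eq_square)
  also have "a j \<bullet> (z - xstar) = a j \<bullet> z - b j"
    using assms(2) by (simp add: inner_diff_right)
  also have "(norm (z - xstar))\<^sup>2 - 2 * t * (a j \<bullet> z - b j) + t\<^sup>2 * (norm (a j))\<^sup>2
      = (norm (z - xstar))\<^sup>2 - ((a j \<bullet> z - b j) / norm (a j))\<^sup>2"
    unfolding t_def using assms(1) by (simp add: field_simps power2_eq_square)
  finally show ?thesis .
qed

lemma norm_kcomp_diff_sq:
  fixes a :: "nat \<Rightarrow> real ^'n"
  assumes "\<forall>j\<in>{1..m}. a j \<noteq> 0" and "\<forall>j\<in>{1..m}. a j \<bullet> xstar = b j" and "k \<le> m"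
  shows "(norm (kcomp a b k z - xstar))\<^sup>2 = (norm (z - xstar))\<^sup>2 - (\<Sum>j=1..k. (kres a b j z)\<^sup>2)"
  using assms(3)
proof (induction k)
  case 0
  then show ?case by simp
next
  case (Suc k)
  have "(norm (kcomp a b (Suc k) z - xstar))\<^sup>2
      = (norm (kcomp a b k z - xstar))\<^sup>2 - (kres a b (Suc k) z)\<^sup>2"
    using norm_kproj_diff_sq[of a "Suc k" xstar b] assms Suc.prems by (simp add: kres_def)
  then show ?case using Suc by simp
qed

lemma kres_eq_0_if_kcycle_not_closer:
  fixes a :: "nat \<Rightarrow> real ^'n"
  assumes "\<forall>j\<in>{1..m}. a j \<noteq> 0" and "\<forall>j\<in>{1..m}. a j \<bullet> xstar = b j"
    and "(norm (z - xstar))\<^sup>2 \<le> (norm (kcycle a b m z - xstar))\<^sup>2"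
  shows "\<forall>j\<in>{1..m}. kres a b j z = 0"
proof -
  have "(\<Sum>j=1..m. (kres a b j z)\<^sup>2) \<le> 0"
    using assms norm_kcomp_diff_sq[OF assms(1,2) order_refl, of z] by (simp add: kcycle_def)
  then have "(\<Sum>j=1..m. (kres a b j z)\<^sup>2) = 0"
    by (simp add: antisym sum_nonneg)
  then show ?thesis
    by (subst (asm) sum_nonneg_eq_0_iff) auto
qed

lemma kcomp_fixed_if_kres_eq_0:
  fixes a :: "nat \<Rightarrow> real ^'n"
  assumes "\<forall>j\<in>{1..m}. a j \<noteq> 0" and "\<forall>j\<in>{1..m}. kres a b j z = 0" and "k \<le> m"
  shows "kcomp a b k z = z \<and> (\<forall>j\<in>{1..k}. a j \<bullet> z = b j)"
  using assms(3)
proof (induction k)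
  case 0
  then show ?case by simp
next
  case (Suc k)
  then have fixed: "kcomp a b k z = z" and rows: "\<forall>j\<in>{1..k}. a j \<bullet> z = b j"
    by simp_all
  have "kres a b (Suc k) z = 0"
    using assms(2) Suc.prems by simp
  then have "a (Suc k) \<bullet> z = b (Suc k)"
    using assms(1) Suc.prems fixed by (simp add: kres_def)
  then show ?case
    using fixed rows by (auto simp: kproj_def le_Suc_eq)
qed

theorem lemma6:
  fixes a :: "nat \<Rightarrow> real ^'n" and b :: "nat \<Rightarrow> real" and m :: nat
    and xstar :: "real ^'n" and x :: "nat \<Rightarrow> real ^'n" and l :: nat
  assumes rows_nz: "\<forall>j\<in>{1..m}. a j \<noteq> 0"
    and b_range: "\<exists>z. \<forall>j\<in>{1..m}. a j \<bullet> z = b j"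
    and sol: "\<forall>j\<in>{1..m}. a j \<bullet> xstar = b j"
    and l_pos: "l \<ge> 1"
    and argmin: "x l \<in> affine hull (x ` {1..l})"
                "\<forall>\<xi>\<in>affine hull (x ` {1..l}). (norm (x l - xstar))\<^sup>2 \<le> (norm (\<xi> - xstar))\<^sup>2"
    and P_in: "kcycle a b m (x l) \<in> affine hull (x ` {1..l})"
  shows "(\<forall>j\<in>{1..m}. kres a b j (x l) = 0) \<and> kcycle a b m (x l) = x l
         \<and> (\<forall>j\<in>{1..m}. a j \<bullet> x l = b j)"
proof -
  have "(norm (x l - xstar))\<^sup>2 \<le> (norm (kcycle a b m (x l) - xstar))\<^sup>2"
    using argmin(2) P_in by blast
  then have res: "\<forall>j\<in>{1..m}. kres a b j (x l) = 0"
    using kres_eq_0_if_kcycle_not_closer[OF rows_nz sol] by blast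
  show ?thesis
    using res kcomp_fixed_if_kres_eq_0[OF rows_nz res order_refl] by (simp add: kcycle_def)
qed

end
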